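(* Let $n$ be an even positive integer. Then every welded link (with any number of components) is $V(n)$-equivalent to the unknot.
   Context: A virtual link diagram is the image of an immersion of finitely many ordered, oriented circles in the plane whose double points are transverse and each is either a classical crossing (with over/under information) or a virtual crossing (no over/under information). Welded Reidemeister moves are: the classical Reidemeister moves R1–R3; the virtual moves VR1–VR3 (the Reidemeister moves with all crossings virtual) and VR4 (a strand containing only virtual crossings slides past a classical crossing); and the OC move (if a strand passes over two other strands at two classical crossings, and those two strands cross each other at a virtual crossing, the first strand may be slid across that virtual crossing). A welded link is an equivalence class of virtual link diagrams under welded Reidemeister moves; the unknot is the class of a single circle without crossings. The $V(n)$-move is the following local move on a virtual link diagram. Inside a disk the diagram consists of two arcs oriented in the same direction (say both running upward). On one side of the move the two arcs twist around each other through $n$ consecutive classical crossings forming a two-strand twist (the $2$-braid $\sigma^{n}$, all $n$ crossings of the same sign); on the other side the two arcs, with the same four endpoints on the boundary of the disk, cross each other exactly once at a single virtual crossing. The move replaces one side by the other. (For $n$ even the connectivity of the endpoints changes, so the move may change the number of components.) Two welded links are $V(n)$-equivalent if diagrams of them are related by a finite sequence of $V(n)$-moves and welded Reidemeister moves. *)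

theory Defs
  imports Main "HOL-Library.Multiset"
begin

(* Welded links are modelled by Gauss diagrams.
   A diagram is a list of components (ordered, oriented circles); each
   component is a cyclic word of crossing ends.  A crossing end is
   (crossing label, over/under end, sign of the crossing; True = positive). *)

datatype ekind = OverE | UnderE

fun opp :: "ekind \<Rightarrow> ekind" where
  "opp OverE = UnderE" | "opp UnderE = OverE"

type_synonym letter = "nat \<times> ekind \<times> bool"
type_synonym gauss = "letter list list"

definition gwf :: "gauss \<Rightarrow> bool" where
  "gwf D \<longleftrightarrow> distinct (map (\<lambda>(c,k,s). (c,k)) (concat D)) \<and>
     (\<forall>(c,k,s) \<in> set (concat D). (c, opp k, s) \<in> set (concat D))"

definition gids :: "gauss \<Rightarrow> nat set" where
  "gids D = fst ` set (concat D)"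

definition adj :: "gauss \<Rightarrow> letter \<Rightarrow> letter \<Rightarrow> bool" where
  "adj D a b \<longleftrightarrow> (\<exists>i<length D. \<exists>j<length (D!i).
      D!i!j = a \<and> D!i!(Suc j mod length (D!i)) = b)"

definition ordpair :: "gauss \<Rightarrow> bool \<Rightarrow> letter \<Rightarrow> letter \<Rightarrow> bool" where
  "ordpair D b0 a b \<longleftrightarrow> (if b0 then adj D a b else adj D b a)"

definition swp :: "letter \<Rightarrow> letter \<Rightarrow> letter \<Rightarrow> letter" where
  "swp a b l = (if l = a then b else if l = b then a else l)"

definition del_ids :: "nat set \<Rightarrow> gauss \<Rightarrow> gauss" where
  "del_ids C D = map (filter (\<lambda>l. fst l \<notin> C)) D"

definition r1_del :: "gauss \<Rightarrow> gauss \<Rightarrow> bool" where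
  "r1_del D D' \<longleftrightarrow> (\<exists>c s. (adj D (c,OverE,s) (c,UnderE,s) \<or> adj D (c,UnderE,s) (c,OverE,s))
       \<and> D' = del_ids {c} D)"

(* R2: delete two crossings of opposite signs where one strand passes over
   another twice *)
definition r2_del :: "gauss \<Rightarrow> gauss \<Rightarrow> bool" where
  "r2_del D D' \<longleftrightarrow> (\<exists>c d sc sd. c \<noteq> d \<and> sc \<noteq> sd \<and>
       adj D (c,OverE,sc) (d,OverE,sd) \<and>
       (adj D (c,UnderE,sc) (d,UnderE,sd) \<or> adj D (d,UnderE,sd) (c,UnderE,sc)) \<and>
       D' = del_ids {c,d} D)"

(* R3: top strand T over middle M (crossing x) and bottom B (crossing y),
   M over B (crossing z).  On each of the three strands the two ends are
   adjacent; the move reverses each of these three pairs.  The sign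
   condition singles out exactly the configurations realised by three
   oriented lines in the plane. *)
definition r3 :: "gauss \<Rightarrow> gauss \<Rightarrow> bool" where
  "r3 D D' \<longleftrightarrow> (\<exists>x y z sx sy sz oT oM oB. distinct [x,y,z] \<and>
       ordpair D oT (x,OverE,sx) (y,OverE,sy) \<and>
       ordpair D oM (x,UnderE,sx) (z,OverE,sz) \<and>
       ordpair D oB (y,UnderE,sy) (z,UnderE,sz) \<and>
       ((sx = sy) = (oM = oB)) \<and> ((sy = sz) = (oT = oM)) \<and>
       D' = map (map (swp (x,OverE,sx) (y,OverE,sy) \<circ> swp (x,UnderE,sx) (z,OverE,sz)
                       \<circ> swp (y,UnderE,sy) (z,UnderE,sz))) D)"

definition oc :: "gauss \<Rightarrow> gauss \<Rightarrow> bool" where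
  "oc D D' \<longleftrightarrow> (\<exists>c d sc sd. c \<noteq> d \<and> adj D (c,OverE,sc) (d,OverE,sd) \<and>
       D' = map (map (swp (c,OverE,sc) (d,OverE,sd))) D)"

definition giso :: "gauss \<Rightarrow> gauss \<Rightarrow> bool" where
  "giso D D' \<longleftrightarrow>
     (\<exists>i m. i < length D \<and> D' = D[i := rotate m (D!i)]) \<or>
     mset D' = mset D \<or>
     (\<exists>g. inj_on g (gids D) \<and> D' = map (map (\<lambda>(c,k,s). (g c, k, s))) D)"

(* V(n)-move, from the virtual-crossing side (points X, Y) to the twist side.
   X is placed at the junction end->start of the first component, Y at the
   junction end->start of the second component, or inside the first one
   between u and v. W1 is the word read along the strand entering at X,
   W2 along the strand entering at Y. *)
definition vn_ins :: "nat \<Rightarrow> gauss \<Rightarrow> gauss \<Rightarrow> bool" where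
  "vn_ins n D D' \<longleftrightarrow> (\<exists>ids s k0. length ids = n \<and> distinct ids \<and> set ids \<inter> gids D = {} \<and>
     (let W1 = map (\<lambda>i. (ids!i, if even i then k0 else opp k0, s)) [0..<n];
          W2 = map (\<lambda>i. (ids!i, if even i then opp k0 else k0, s)) [0..<n]
      in (\<exists>a b rest. D = a # b # rest \<and>
             D' = (if even n then (a @ W1 @ b @ W2) # rest
                   else (a @ W1) # (b @ W2) # rest)) \<or>
         (\<exists>u v rest. D = (u @ v) # rest \<and>
             D' = (if even n then (u @ W2) # (v @ W1) # rest
                   else (u @ W2 @ v @ W1) # rest))))"

definition welded_step :: "gauss \<Rightarrow> gauss \<Rightarrow> bool" where
  "welded_step D D' \<longleftrightarrow> gwf D \<and> gwf D' \<and>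
     (r1_del D D' \<or> r2_del D D' \<or> r3 D D' \<or> oc D D' \<or> giso D D')"

definition vn_step :: "nat \<Rightarrow> gauss \<Rightarrow> gauss \<Rightarrow> bool" where
  "vn_step n D D' \<longleftrightarrow> welded_step D D' \<or> (gwf D \<and> gwf D' \<and> vn_ins n D D')"

definition vn_equiv :: "nat \<Rightarrow> gauss \<Rightarrow> gauss \<Rightarrow> bool" where
  "vn_equiv n = (\<lambda>D D'. vn_step n D D' \<or> vn_step n D' D)\<^sup>*\<^sup>*"

definition unknot :: gauss where
  "unknot = [[]]"

end

(*
  For even n a V(n)-move, combined with rotations of components, reverses any crossing, i.e.
  exchanges its over- and under-end.  A one-component diagram is then unknotted by induction
  on its length: take the first place where a crossing c repeats, so that the letters between
  the two ends of c belong to distinct crossings; reversing those of them that are under-ends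
  turns them all into over-ends, across which OC moves slide one end of c next to the other,
  and R1 deletes c.  Finally, for even n a single V(n)-move merges two components into one.
*)

theory Submission
  imports Defs
begin

lemma vn_equiv_refl [simp]: "vn_equiv n D D"
  by (simp add: vn_equiv_def)

lemma vn_equiv_trans [trans]: "vn_equiv n A B \<Longrightarrow> vn_equiv n B C \<Longrightarrow> vn_equiv n A C"
  unfolding vn_equiv_def by (rule rtranclp_trans)

lemma vn_equiv_sym: "vn_equiv n A B \<Longrightarrow> vn_equiv n B A"
  unfolding vn_equiv_def
proof (induction rule: rtranclp_induct)
  case (step B C)
  then show ?case by (blast intro: converse_rtranclp_into_rtranclp)
qed simp

lemma vn_equiv_vn_step: "vn_step n A B \<Longrightarrow> vn_equiv n A B"
  unfolding vn_equiv_def by (rule r_into_rtranclp) simp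

lemma vn_equiv_welded_step: "welded_step A B \<Longrightarrow> vn_equiv n A B"
  by (rule vn_equiv_vn_step) (simp add: vn_step_def)

lemma vn_equiv_gwf: "vn_equiv n D D' \<Longrightarrow> gwf D \<Longrightarrow> gwf D'"
  unfolding vn_equiv_def
  by (induction rule: rtranclp_induct) (auto simp: vn_step_def welded_step_def)

lemma opp_neq [simp]: "opp k \<noteq> k" "k \<noteq> opp k"
  by (cases k; simp)+

lemma opp_opp [simp]: "opp (opp k) = k"
  by (cases k) simp_all

lemma opp_eq_iff [simp]: "opp k = opp k' \<longleftrightarrow> k = k'"
  by (cases k; cases k') simp_all

definition end_key :: "letter \<Rightarrow> nat \<times> ekind" where
  "end_key = (\<lambda>(c,k,s). (c,k))"

definition wf_word :: "letter list \<Rightarrow> bool" where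
  "wf_word xs \<longleftrightarrow> distinct (map end_key xs) \<and>
     (\<forall>c k s. (c,k,s) \<in> set xs \<longrightarrow> (c, opp k, s) \<in> set xs)"

lemma gwf_iff_wf_word: "gwf D \<longleftrightarrow> wf_word (concat D)"
  unfolding gwf_def wf_word_def end_key_def by fast

lemma end_key_simp [simp]: "end_key (c,k,s) = (c,k)"
  by (simp add: end_key_def)

lemma fst_end_key [simp]: "fst (end_key l) = fst l"
  by (cases l) simp

lemma wf_word_mset:
  assumes "mset xs = mset ys" and "wf_word xs"
  shows "wf_word ys"
proof -
  have "set xs = set ys" using assms(1) by (metis set_mset_mset)
  moreover have "distinct (map end_key xs) = distinct (map end_key ys)"
    using assms(1) by (intro mset_eq_imp_distinct_iff) simp
  ultimately show ?thesis using assms(2) unfolding wf_word_def by simp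
qed

lemma wf_word_distinct: "wf_word xs \<Longrightarrow> distinct xs"
  unfolding wf_word_def using distinct_map by blast

lemma wf_word_partner: "wf_word xs \<Longrightarrow> (c,k,s) \<in> set xs \<Longrightarrow> (c, opp k, s) \<in> set xs"
  unfolding wf_word_def by fast

lemma wf_word_crossing_ends:
  assumes wf: "wf_word xs" and "(c,k,s) \<in> set xs" and "l \<in> set xs" and "fst l = c"
  shows "l = (c,k,s) \<or> l = (c, opp k, s)"
proof -
  obtain k' t where l: "l = (c,k',t)" using assms(4) by (cases l) auto
  have inj: "inj_on end_key (set xs)" using wf unfolding wf_word_def by (simp add: distinct_map)
  have partner: "(c, opp k, s) \<in> set xs" using wf_word_partner[OF wf assms(2)] .
  have "k' = k \<or> k' = opp k" by (cases k; cases k') simp_all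
  then show ?thesis
  proof
    assume "k' = k"
    then have "end_key l = end_key (c,k,s)" by (simp add: l)
    then show ?thesis using inj_onD[OF inj _ assms(3,2)] by simp
  next
    assume "k' = opp k"
    then have "end_key l = end_key (c, opp k, s)" by (simp add: l)
    then show ?thesis using inj_onD[OF inj _ assms(3) partner] by simp
  qed
qed

lemma wf_word_append:
  assumes "wf_word xs" and "wf_word ys" and disjoint: "fst ` set xs \<inter> fst ` set ys = {}"
  shows "wf_word (xs @ ys)"
proof -
  have "fst ` end_key ` set xs \<inter> fst ` end_key ` set ys = {}"
    using disjoint by (simp add: image_image)
  then have "set (map end_key xs) \<inter> set (map end_key ys) = {}" by auto
  with assms(1,2) show ?thesis unfolding wf_word_def by (simp add: distinct_append)
qed

lemma wf_word_filter:
  assumes wf: "wf_word xs"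
  shows "wf_word (filter (\<lambda>l. fst l \<notin> C) xs)"
proof -
  have "distinct (map end_key (filter (\<lambda>l. fst l \<notin> C) xs))"
    using wf unfolding wf_word_def by (simp add: distinct_map_filter)
  moreover have "(c, opp k, s) \<in> set (filter (\<lambda>l. fst l \<notin> C) xs)"
    if "(c,k,s) \<in> set (filter (\<lambda>l. fst l \<notin> C) xs)" for c k s
    using that wf_word_partner[OF wf, of c k s] by simp
  ultimately show ?thesis unfolding wf_word_def by blast
qed

lemma wf_word_crossing_not_elsewhere:
  assumes "wf_word (x @ (c,k,s) # z @ (c, opp k, s) # y)"
  shows "c \<notin> fst ` set (x @ z @ y)"
proof
  assume "c \<in> fst ` set (x @ z @ y)"
  then obtain l where l: "l \<in> set (x @ z @ y)" "fst l = c" by blast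
  then have "l = (c,k,s) \<or> l = (c, opp k, s)"
    by (intro wf_word_crossing_ends[OF assms]) auto
  then show False using wf_word_distinct[OF assms] l(1) by auto
qed

lemma filter_delete_crossing:
  assumes "wf_word (x @ (c,k,s) # z @ (c, opp k, s) # y)"
  shows "filter (\<lambda>l. fst l \<notin> {c}) (x @ (c,k,s) # z @ (c, opp k, s) # y) = x @ z @ y"
proof -
  have "\<forall>l \<in> set (x @ z @ y). fst l \<notin> {c}"
    using wf_word_crossing_not_elsewhere[OF assms] by auto
  then show ?thesis by simp
qed

lemma wf_word_delete_pair:
  "wf_word (x @ (c,k,s) # z @ (c, opp k, s) # y) \<Longrightarrow> wf_word (x @ z @ y)"
  by (metis wf_word_filter filter_delete_crossing)

definition switch_crossings :: "nat set \<Rightarrow> letter \<Rightarrow> letter" where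
  "switch_crossings F = (\<lambda>(c,k,s). if c \<in> F then (c, opp k, s) else (c,k,s))"

lemma switch_crossings_simp [simp]:
  "switch_crossings F (c,k,s) = (if c \<in> F then (c, opp k, s) else (c,k,s))"
  by (simp add: switch_crossings_def)

lemma switch_crossings_id:
  assumes "fst ` set xs \<inter> F = {}"
  shows "map (switch_crossings F) xs = xs"
proof (rule map_idI)
  fix l assume "l \<in> set xs"
  with assms have "fst l \<notin> F" by blast
  then show "switch_crossings F l = l" by (cases l) simp
qed

lemma switch_crossings_insert:
  "d \<notin> F \<Longrightarrow> switch_crossings (insert d F) = switch_crossings {d} \<circ> switch_crossings F"
  by (auto simp: fun_eq_iff)

lemma wf_word_switch_crossings:
  assumes wf: "wf_word xs"
  shows "wf_word (map (switch_crossings F) xs)"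
proof -
  let ?sw = "\<lambda>(c,k). if c \<in> F then (c, opp k) else (c,k)"
  have "inj ?sw" by (auto simp: inj_def)
  then have "distinct (map ?sw (map end_key xs))"
    using wf unfolding wf_word_def distinct_map[of ?sw] by (blast intro: inj_on_subset)
  moreover have "map ?sw (map end_key xs) = map end_key (map (switch_crossings F) xs)"
    by (auto simp: end_key_def switch_crossings_def)
  ultimately have "distinct (map end_key (map (switch_crossings F) xs))" by metis
  moreover have "(c, opp k, s) \<in> switch_crossings F ` set xs"
    if image: "(c,k,s) \<in> switch_crossings F ` set xs" for c k s
  proof -
    obtain l where l: "(c,k,s) = switch_crossings F l" "l \<in> set xs" using image by (rule imageE)
    obtain k0 where l_eq: "l = (c,k0,s)" and k: "k = (if c \<in> F then opp k0 else k0)"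
      using l(1) by (cases l) (auto split: if_splits)
    have "(c, opp k0, s) \<in> set xs" using wf_word_partner[OF wf] l(2) l_eq by simp
    moreover have "switch_crossings F (c, opp k0, s) = (c, opp k, s)" by (simp add: k)
    ultimately show ?thesis by (metis image_eqI)
  qed
  ultimately show ?thesis unfolding wf_word_def set_map by blast
qed

definition relabel :: "(nat \<Rightarrow> nat) \<Rightarrow> letter \<Rightarrow> letter" where
  "relabel g = (\<lambda>(c,k,s). (g c, k, s))"

lemma relabel_simp [simp]: "relabel g (c,k,s) = (g c, k, s)"
  by (simp add: relabel_def)

lemma map_relabel_fresh:
  assumes "c \<notin> fst ` set xs"
  shows "map (relabel (id(c := d))) xs = xs"
proof (rule map_idI)
  fix l assume "l \<in> set xs"
  with assms have "fst l \<noteq> c" by force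
  then show "relabel (id(c := d)) l = l" by (cases l) simp
qed

lemma wf_word_relabel:
  assumes wf: "wf_word xs" and inj: "inj_on g (fst ` set xs)"
  shows "wf_word (map (relabel g) xs)"
proof -
  let ?rl = "map_prod g id"
  have "set (map end_key xs) \<subseteq> fst ` set xs \<times> UNIV"
    by (force simp: end_key_def)
  then have "inj_on ?rl (set (map end_key xs))"
    using map_prod_inj_on[OF inj inj_on_id] by (rule inj_on_subset[rotated])
  then have "distinct (map ?rl (map end_key xs))"
    using wf unfolding wf_word_def distinct_map[of ?rl] by blast
  moreover have "map ?rl (map end_key xs) = map end_key (map (relabel g) xs)"
    by (auto simp: end_key_def relabel_def)
  ultimately have "distinct (map end_key (map (relabel g) xs))" by metis
  moreover have "(c, opp k, s) \<in> relabel g ` set xs" if image: "(c,k,s) \<in> relabel g ` set xs" for c k s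
  proof -
    obtain l where l: "(c,k,s) = relabel g l" "l \<in> set xs" using image by (rule imageE)
    obtain c0 where l_eq: "l = (c0,k,s)" and c: "c = g c0" using l(1) by (cases l) simp
    have "(c0, opp k, s) \<in> set xs" using wf_word_partner[OF wf] l(2) l_eq by simp
    then show ?thesis using c by (metis image_eqI relabel_simp)
  qed
  ultimately show ?thesis unfolding wf_word_def set_map by blast
qed

(* One strand of the twist of a V(n)-move on the crossings ids; the other strand reads
   twist_word ids (opp k) s. *)
fun twist_word :: "nat list \<Rightarrow> ekind \<Rightarrow> bool \<Rightarrow> letter list" where
  "twist_word [] k s = []"
| "twist_word (c # cs) k s = (c,k,s) # twist_word cs (opp k) s"

lemma twist_word_conv_map:
  "twist_word ids k s = map (\<lambda>i. (ids!i, if even i then k else opp k, s)) [0..<length ids]"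
proof (induction ids arbitrary: k)
  case (Cons c cs)
  then show ?case by (simp add: map_upt_Suc del: upt_Suc)
qed simp

lemma twist_word_snoc:
  "twist_word (ids @ [d]) k s = twist_word ids k s @ [(d, if even (length ids) then k else opp k, s)]"
  by (induction ids arbitrary: k) simp_all

lemma fst_set_twist_word [simp]: "fst ` set (twist_word ids k s) = set ids"
  by (induction ids arbitrary: k) simp_all

lemma wf_word_twist_pair:
  "distinct ids \<Longrightarrow> wf_word (twist_word ids k s @ twist_word ids (opp k) s)"
proof (induction ids arbitrary: k)
  case Nil
  then show ?case by (simp add: wf_word_def)
next
  case (Cons c cs)
  have "wf_word [(c,k,s), (c, opp k, s)]" by (auto simp: wf_word_def)
  moreover have "wf_word (twist_word cs (opp k) s @ twist_word cs k s)"
    using Cons.IH[of "opp k"] Cons.prems by simp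
  ultimately have "wf_word ([(c,k,s), (c, opp k, s)] @ twist_word cs (opp k) s @ twist_word cs k s)"
    by (rule wf_word_append) (use Cons.prems in \<open>simp add: image_Un\<close>)
  then show ?case by (rule wf_word_mset[rotated]) simp
qed

lemma wf_word_add_twist:
  assumes "wf_word w" and "distinct ids" and "set ids \<inter> fst ` set w = {}"
  shows "wf_word (w @ twist_word ids k s @ twist_word ids (opp k) s)"
  using assms(1) wf_word_twist_pair[OF assms(2)]
  by (rule wf_word_append) (use assms(3) in \<open>simp add: image_Un Int_commute\<close>)

lemma fresh_ids:
  assumes "finite (A :: nat set)"
  obtains ids where "length ids = n" "distinct ids" "set ids \<inter> A = {}"
proof -
  obtain N where "\<forall>x \<in> A. x < N" using assms finite_nat_set_iff_bounded by blast
  then show ?thesis by (intro that[of "[N..<N+n]"]) auto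
qed

lemma finite_gids [simp]: "finite (gids D)"
  by (simp add: gids_def)

lemma gids_single [simp]: "gids [w] = fst ` set w"
  by (simp add: gids_def)

lemma mset_rotate [simp]: "mset (rotate m xs) = mset xs"
  by (metis append_take_drop_id mset_append rotate_drop_take union_commute)

lemma vn_equiv_rotate:
  assumes wf: "gwf D" and i: "i < length D"
  shows "vn_equiv n D (D[i := rotate m (D!i)])"
proof (rule vn_equiv_welded_step)
  have "mset (concat (D[i := rotate m (D!i)])) = mset (concat D)"
    by (subst (2) id_take_nth_drop[OF i]) (simp add: upd_conv_take_nth_drop[OF i])
  then have "gwf (D[i := rotate m (D!i)])"
    using wf unfolding gwf_iff_wf_word by (metis wf_word_mset)
  moreover have "giso D (D[i := rotate m (D!i)])"
    unfolding giso_def using i by (intro disjI1 exI[of _ i] exI[of _ m]) simp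
  ultimately show "welded_step D (D[i := rotate m (D!i)])"
    using wf by (simp add: welded_step_def)
qed

lemma vn_equiv_rotate_word: "wf_word w \<Longrightarrow> vn_equiv n [w] [rotate m w]"
  using vn_equiv_rotate[of "[w]" 0] by (simp add: gwf_iff_wf_word)

lemma vn_equiv_rotate_component:
  assumes "gwf D" and "i < length D" and "D!i = u @ v"
  shows "vn_equiv n D (D[i := v @ u])"
  using vn_equiv_rotate[OF assms(1,2), of n "length u"] assms(3) by (simp add: rotate_append)

lemma vn_equiv_relabel:
  assumes wf: "gwf D" and inj: "inj_on g (gids D)"
  shows "vn_equiv n D (map (map (relabel g)) D)"
proof (rule vn_equiv_welded_step)
  have "gwf (map (map (relabel g)) D)"
    using wf_word_relabel[of "concat D" g] wf inj
    by (simp add: gwf_iff_wf_word gids_def map_concat)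
  moreover have "giso D (map (map (relabel g)) D)"
    unfolding giso_def relabel_def using inj by (intro disjI2 exI[of _ g]) simp
  ultimately show "welded_step D (map (map (relabel g)) D)"
    using wf by (simp add: welded_step_def)
qed

lemma adj_consecutive: "adj [x @ a # b # y] a b"
proof -
  have "Suc (length x) mod length (x @ a # b # y) = Suc (length x)" by simp
  then show ?thesis unfolding adj_def
    by (intro exI[of _ 0]) (auto intro!: exI[of _ "length x"] simp: nth_append)
qed

lemma map_swp_id: "a \<notin> set xs \<Longrightarrow> b \<notin> set xs \<Longrightarrow> map (swp a b) xs = xs"
  by (induction xs) (auto simp: swp_def)

lemma swp_left: "swp a b a = b"
  by (simp add: swp_def)

lemma swp_right: "a \<noteq> b \<Longrightarrow> swp a b b = a"
  by (simp add: swp_def)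

lemma vn_equiv_oc_swap:
  assumes wf: "wf_word (x @ (c,OverE,s) # (d,OverE,t) # y)" and "c \<noteq> d"
  shows "vn_equiv n [x @ (c,OverE,s) # (d,OverE,t) # y] [x @ (d,OverE,t) # (c,OverE,s) # y]"
proof (rule vn_equiv_welded_step)
  let ?a = "(c,OverE,s)" and ?b = "(d,OverE,t)"
  have "?a \<notin> set x" "?b \<notin> set x" "?a \<notin> set y" "?b \<notin> set y"
    using wf_word_distinct[OF wf] by auto
  then have swapped: "[x @ ?b # ?a # y] = map (map (swp ?a ?b)) [x @ ?a # ?b # y]"
    using swp_left swp_right[of ?a ?b] assms(2) by (simp add: map_swp_id)
  have "oc [x @ ?a # ?b # y] [x @ ?b # ?a # y]"
    unfolding oc_def
    by (intro exI[of _ c] exI[of _ d] exI[of _ s] exI[of _ t] conjI assms(2) adj_consecutive swapped)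
  moreover have "wf_word (x @ ?b # ?a # y)" using wf by (rule wf_word_mset[rotated]) simp
  ultimately show "welded_step [x @ ?a # ?b # y] [x @ ?b # ?a # y]"
    using wf by (simp add: welded_step_def gwf_iff_wf_word)
qed

lemma vn_equiv_r1:
  assumes wf: "wf_word (x @ (c,k,s) # (c, opp k, s) # y)"
  shows "vn_equiv n [x @ (c,k,s) # (c, opp k, s) # y] [x @ y]"
proof (rule vn_equiv_welded_step)
  have "[x @ y] = del_ids {c} [x @ (c,k,s) # (c, opp k, s) # y]"
    using filter_delete_crossing[of x c k s "[]" y] wf by (simp add: del_ids_def)
  moreover have "adj [x @ (c,k,s) # (c, opp k, s) # y] (c,OverE,s) (c,UnderE,s) \<or>
      adj [x @ (c,k,s) # (c, opp k, s) # y] (c,UnderE,s) (c,OverE,s)"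
    by (cases k) (simp_all add: adj_consecutive)
  ultimately have "r1_del [x @ (c,k,s) # (c, opp k, s) # y] [x @ y]"
    unfolding r1_del_def by (intro exI[of _ c] exI[of _ s] conjI)
  moreover have "wf_word (x @ y)" using wf_word_delete_pair[of x c k s "[]" y] wf by simp
  ultimately show "welded_step [x @ (c,k,s) # (c, opp k, s) # y] [x @ y]"
    using wf by (simp add: welded_step_def gwf_iff_wf_word)
qed

lemma vn_equiv_split:
  assumes "even n" "length ids = n" "distinct ids"
    and fresh: "set ids \<inter> gids ((u @ v) # rest) = {}" and wf: "gwf ((u @ v) # rest)"
  shows "vn_equiv n ((u @ v) # rest)
           ((u @ twist_word ids k s) # (v @ twist_word ids (opp k) s) # rest)"
proof (rule vn_equiv_vn_step)
  let ?D = "(u @ v) # rest" and ?D' = "(u @ twist_word ids k s) # (v @ twist_word ids (opp k) s) # rest"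
  have "vn_ins n ?D ?D'"
    unfolding vn_ins_def Let_def
    by (intro exI[of _ ids] exI[of _ s] exI[of _ "opp k"]) (use assms in \<open>simp add: twist_word_conv_map\<close>)
  moreover have "wf_word (concat ?D @ twist_word ids k s @ twist_word ids (opp k) s)"
    using wf fresh assms(3) by (intro wf_word_add_twist) (auto simp: gwf_iff_wf_word gids_def)
  then have "gwf ?D'" unfolding gwf_iff_wf_word by (rule wf_word_mset[rotated]) simp
  ultimately show "vn_step n ?D ?D'" using wf by (simp add: vn_step_def)
qed

lemma vn_equiv_merge:
  assumes "even n" "length ids = n" "distinct ids"
    and fresh: "set ids \<inter> gids (a # b # rest) = {}" and wf: "gwf (a # b # rest)"
  shows "vn_equiv n (a # b # rest) ((a @ twist_word ids k s @ b @ twist_word ids (opp k) s) # rest)"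
proof (rule vn_equiv_vn_step)
  let ?D = "a # b # rest" and ?D' = "(a @ twist_word ids k s @ b @ twist_word ids (opp k) s) # rest"
  have "vn_ins n ?D ?D'"
    unfolding vn_ins_def Let_def
    by (intro exI[of _ ids] exI[of _ s] exI[of _ k]) (use assms in \<open>simp add: twist_word_conv_map\<close>)
  moreover have "wf_word (concat ?D @ twist_word ids k s @ twist_word ids (opp k) s)"
    using wf fresh assms(3) by (intro wf_word_add_twist) (auto simp: gwf_iff_wf_word gids_def)
  then have "gwf ?D'" unfolding gwf_iff_wf_word by (rule wf_word_mset[rotated]) simp
  ultimately show "vn_step n ?D ?D'" using wf by (simp add: vn_step_def)
qed

section \<open>Reversing a crossing\<close>

lemma vn_equiv_rotate_last_letters:
  assumes wf: "gwf [A @ [x], B @ [y]]"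
  shows "vn_equiv n [A @ [x], B @ [y]] [x # A, y # B]"
proof -
  have first: "vn_equiv n [A @ [x], B @ [y]] [x # A, B @ [y]]"
    using vn_equiv_rotate_component[OF wf, of 0 A "[x]" n] by simp
  also have "vn_equiv n \<dots> [x # A, y # B]"
    using vn_equiv_rotate_component[OF vn_equiv_gwf[OF first wf], of 1 B "[y]" n] by simp
  finally show ?thesis .
qed

lemma wf_word_reverse_crossing_fresh:
  assumes wf: "wf_word ((c,k,s) # p @ (c, opp k, s) # q)"
    and d: "d \<notin> insert c (fst ` set (p @ q))"
  shows "wf_word ((d, opp k, s) # p @ (d,k,s) # q)"
proof -
  have c: "c \<notin> fst ` set (p @ q)" using wf_word_crossing_not_elsewhere[of "[]" c k s p q] wf by simp
  then have "fst ` set p \<inter> {c} = {}" "fst ` set q \<inter> {c} = {}" by auto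
  then have "map (switch_crossings {c}) ((c,k,s) # p @ (c, opp k, s) # q) =
      (c, opp k, s) # p @ (c,k,s) # q"
    by (simp add: switch_crossings_id)
  with wf_word_switch_crossings[OF wf] have "wf_word ((c, opp k, s) # p @ (c,k,s) # q)"
    by metis
  moreover have "map (relabel (id(c := d))) ((c, opp k, s) # p @ (c,k,s) # q)
      = (d, opp k, s) # p @ (d,k,s) # q"
    using c by (simp add: map_relabel_fresh image_Un)
  moreover have "inj_on (id(c := d)) (fst ` set ((c, opp k, s) # p @ (c,k,s) # q))"
    using d by (auto simp: inj_on_def)
  ultimately show ?thesis using wf_word_relabel by metis
qed

(* Split the component just after both ends of c by a twist on fresh crossings js @ [d].
   As js has odd length, rotating the last letter of each new component to its front exhibits
   the same diagram as a split, by a twist on c # js, of the word in which d has taken the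
   place of c with its two ends exchanged. *)
lemma vn_equiv_reverse_crossing_fresh:
  assumes ev: "even n" and pos: "0 < n"
    and wf: "wf_word ((c,k,s) # p @ (c, opp k, s) # q)"
    and d: "d \<notin> insert c (fst ` set (p @ q))"
  shows "vn_equiv n [(c,k,s) # p @ (c, opp k, s) # q] [(d, opp k, s) # p @ (d,k,s) # q]"
proof -
  let ?w = "(c,k,s) # p @ (c, opp k, s) # q"
  let ?A = "fst ` set (p @ q)"
  have c: "c \<notin> ?A" using wf_word_crossing_not_elsewhere[of "[]" c k s p q] wf by simp
  have "finite (insert d (insert c ?A))" by simp
  then obtain js where js: "length js = n - 1" "distinct js" "set js \<inter> insert d (insert c ?A) = {}"
    by (rule fresh_ids)
  have odd_js: "odd (length js)" using js(1) ev pos by simp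
  let ?C1 = "p @ (c, opp k, s) # twist_word js k s"
  let ?C2 = "q @ (c,k,s) # twist_word js (opp k) s"
  have rotated: "vn_equiv n [?w] [(p @ [(c, opp k, s)]) @ (q @ [(c,k,s)])]"
    using vn_equiv_rotate_component[of "[?w]" 0 "[(c,k,s)]" "p @ (c, opp k, s) # q" n] wf
    by (simp add: gwf_iff_wf_word)
  also have "vn_equiv n \<dots>
      [(p @ [(c, opp k, s)]) @ twist_word (js @ [d]) k s,
       (q @ [(c,k,s)]) @ twist_word (js @ [d]) (opp k) s]"
  proof (rule vn_equiv_split[OF ev])
    show "length (js @ [d]) = n" "distinct (js @ [d])"
         "set (js @ [d]) \<inter> gids [(p @ [(c, opp k, s)]) @ q @ [(c,k,s)]] = {}"
      using js pos d c by auto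
    show "gwf [(p @ [(c, opp k, s)]) @ q @ [(c,k,s)]]"
      using vn_equiv_gwf[OF rotated] wf by (simp add: gwf_iff_wf_word)
  qed
  also have "\<dots> = [?C1 @ [(d, opp k, s)], ?C2 @ [(d,k,s)]]"
    using odd_js by (simp add: twist_word_snoc)
  finally have split: "vn_equiv n [?w] [?C1 @ [(d, opp k, s)], ?C2 @ [(d,k,s)]]" .
  have "vn_equiv n [?C1 @ [(d, opp k, s)], ?C2 @ [(d,k,s)]] [(d, opp k, s) # ?C1, (d,k,s) # ?C2]"
    by (rule vn_equiv_rotate_last_letters) (use vn_equiv_gwf[OF split] wf in \<open>simp add: gwf_iff_wf_word\<close>)
  also have "[(d, opp k, s) # ?C1, (d,k,s) # ?C2] =
      [((d, opp k, s) # p) @ twist_word (c # js) (opp k) s, ((d,k,s) # q) @ twist_word (c # js) k s]"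
    by simp
  also have "vn_equiv n \<dots> [(d, opp k, s) # p @ (d,k,s) # q]"
    using vn_equiv_split[OF ev, of "c # js" "(d, opp k, s) # p" "(d,k,s) # q" "[]" "opp k" s]
      js pos c d wf_word_reverse_crossing_fresh[OF wf d]
    by (simp add: gwf_iff_wf_word vn_equiv_sym)
  finally show ?thesis by (rule vn_equiv_trans[OF split])
qed

lemma vn_equiv_reverse_crossing:
  assumes ev: "even n" and pos: "0 < n"
    and wf: "wf_word ((c,k,s) # p @ (c, opp k, s) # q)"
  shows "vn_equiv n [(c,k,s) # p @ (c, opp k, s) # q] [(c, opp k, s) # p @ (c,k,s) # q]"
proof -
  let ?A = "fst ` set (p @ q)"
  obtain d where d: "d \<notin> insert c ?A"
    using ex_new_if_finite[OF infinite_UNIV_nat, of "insert c ?A"] by auto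
  have c: "c \<notin> ?A" using wf_word_crossing_not_elsewhere[of "[]" c k s p q] wf by simp
  have to_d: "vn_equiv n [(c,k,s) # p @ (c, opp k, s) # q] [(d, opp k, s) # p @ (d,k,s) # q]"
    by (rule vn_equiv_reverse_crossing_fresh[OF ev pos wf d])
  also have "vn_equiv n \<dots> (map (map (relabel (id(d := c)))) [(d, opp k, s) # p @ (d,k,s) # q])"
  proof (rule vn_equiv_relabel)
    show "gwf [(d, opp k, s) # p @ (d,k,s) # q]"
      using vn_equiv_gwf[OF to_d] wf by (simp add: gwf_iff_wf_word)
    show "inj_on (id(d := c)) (gids [(d, opp k, s) # p @ (d,k,s) # q])"
      using c by (auto simp: inj_on_def)
  qed
  also have "\<dots> = [(c, opp k, s) # p @ (c,k,s) # q]"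
    using d by (simp add: map_relabel_fresh image_Un)
  finally show ?thesis .
qed

lemma vn_equiv_switch_crossing:
  assumes ev: "even n" and pos: "0 < n" and wf: "wf_word w"
  shows "vn_equiv n [w] [map (switch_crossings {c}) w]"
proof (cases "c \<in> fst ` set w")
  case False
  then show ?thesis by (simp add: switch_crossings_id)
next
  case True
  then obtain l where l: "l \<in> set w" "fst l = c" by blast
  obtain k s where "l = (c,k,s)" using l(2) by (cases l) simp
  with l(1) have end1: "(c,k,s) \<in> set w" by simp
  then obtain xs ys where w: "w = xs @ (c,k,s) # ys" by (meson split_list)
  have "(c, opp k, s) \<in> set w" using wf_word_partner[OF wf end1] .
  then have "(c, opp k, s) \<in> set (ys @ xs)" using w by auto
  then obtain p q where pq: "ys @ xs = p @ (c, opp k, s) # q" by (meson split_list)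
  have rot: "rotate (length xs) w = (c,k,s) # p @ (c, opp k, s) # q"
    using pq by (simp add: w rotate_append)
  have wf_rot: "wf_word ((c,k,s) # p @ (c, opp k, s) # q)"
    using wf_word_mset[OF mset_rotate[symmetric] wf, of "length xs"] unfolding rot .
  have c: "fst ` set p \<inter> {c} = {}" "fst ` set q \<inter> {c} = {}"
    using wf_word_crossing_not_elsewhere[of "[]" c k s p q] wf_rot by auto
  have "vn_equiv n [w] [(c,k,s) # p @ (c, opp k, s) # q]"
    using vn_equiv_rotate_word[OF wf, of n "length xs"] rot by simp
  also have "vn_equiv n \<dots> [(c, opp k, s) # p @ (c,k,s) # q]"
    by (rule vn_equiv_reverse_crossing[OF ev pos wf_rot])
  also have "\<dots> = [rotate (length xs) (map (switch_crossings {c}) w)]"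
    using c by (simp add: rotate_map rot switch_crossings_id)
  also have "vn_equiv n \<dots> [map (switch_crossings {c}) w]"
    by (rule vn_equiv_sym, rule vn_equiv_rotate_word, rule wf_word_switch_crossings[OF wf])
  finally show ?thesis .
qed

lemma vn_equiv_switch_crossings:
  assumes ev: "even n" and pos: "0 < n" and fin: "finite F" and wf: "wf_word w"
  shows "vn_equiv n [w] [map (switch_crossings F) w]"
  using fin
proof (induction F rule: finite_induct)
  case empty
  then show ?case by (simp add: switch_crossings_id)
next
  case (insert d F)
  have "vn_equiv n [map (switch_crossings F) w] [map (switch_crossings {d}) (map (switch_crossings F) w)]"
    using vn_equiv_switch_crossing[OF ev pos wf_word_switch_crossings[OF wf]] .
  also have "map (switch_crossings {d}) (map (switch_crossings F) w) =
      map (switch_crossings (insert d F)) w"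
    by (simp only: map_map switch_crossings_insert[OF insert.hyps(2)])
  finally show ?case by (rule vn_equiv_trans[OF insert.IH])
qed

section \<open>Unknotting\<close>

lemma not_distinct_map_first_repeat:
  "\<not> distinct (map f w) \<Longrightarrow>
    \<exists>x a z b y. w = x @ a # z @ b # y \<and> f a = f b \<and> distinct (map f (a # z))"
proof (induction w rule: rev_induct)
  case (snoc l w)
  show ?case
  proof (cases "distinct (map f w)")
    case False
    then obtain x a z b y where "w = x @ a # z @ b # y" "f a = f b" "distinct (map f (a # z))"
      using snoc.IH[OF False] by blast
    then show ?thesis by (intro exI[of _ x] exI[of _ a] exI[of _ z] exI[of _ b] exI[of _ "y @ [l]"]) simp
  next
    case True
    then have "f l \<in> f ` set w" using snoc.prems by simp
    then obtain a where a: "f l = f a" "a \<in> set w" by (rule imageE)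
    then obtain x z where "w = x @ a # z" by (meson split_list)
    then show ?thesis
      using True a(1) by (intro exI[of _ x] exI[of _ a] exI[of _ z] exI[of _ l] exI[of _ "[]"]) simp
  qed
qed simp

lemma switch_under_ends_all_over:
  assumes "distinct (map fst z)"
  shows "\<forall>l \<in> set (map (switch_crossings (fst ` {l \<in> set z. fst (snd l) = UnderE})) z).
           fst (snd l) = OverE"
proof
  let ?F = "fst ` {l \<in> set z. fst (snd l) = UnderE}"
  fix l' assume "l' \<in> set (map (switch_crossings ?F) z)"
  then obtain l where l: "l' = switch_crossings ?F l" "l \<in> set z" unfolding set_map by (rule imageE)
  obtain d k t where l_eq: "l = (d,k,t)" by (cases l)
  have "d \<in> ?F \<longleftrightarrow> k = UnderE"
  proof
    assume "d \<in> ?F"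
    then obtain l2 where l2: "l2 \<in> set z" "fst (snd l2) = UnderE" "fst l2 = d" by blast
    have "inj_on fst (set z)" using assms by (simp add: distinct_map)
    then have "l2 = l" using inj_onD[of fst "set z" l2 l] l2(1,3) l(2) l_eq by simp
    then show "k = UnderE" using l2(2) l_eq by simp
  next
    assume "k = UnderE"
    then have "l \<in> {l \<in> set z. fst (snd l) = UnderE}" using l(2) l_eq by simp
    then have "fst l \<in> ?F" by (rule imageI)
    with l_eq show "d \<in> ?F" by simp
  qed
  then show "fst (snd l') = OverE" using l(1) l_eq by (cases k) auto
qed

lemma vn_equiv_slide_over:
  "wf_word (x @ (c,OverE,s) # z @ y) \<Longrightarrow> \<forall>l \<in> set z. fst (snd l) = OverE \<and> fst l \<noteq> c \<Longrightarrow>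
    vn_equiv n [x @ (c,OverE,s) # z @ y] [x @ z @ (c,OverE,s) # y]"
proof (induction z arbitrary: x)
  case (Cons l z)
  obtain d t where l: "l = (d,OverE,t)" "d \<noteq> c" using Cons.prems(2) by (cases l) auto
  have "vn_equiv n [x @ (c,OverE,s) # l # z @ y] [x @ l # (c,OverE,s) # z @ y]"
    using vn_equiv_oc_swap[of x c s d t "z @ y"] Cons.prems(1) l by simp
  also have "vn_equiv n \<dots> [x @ l # z @ (c,OverE,s) # y]"
    using Cons.IH[of "x @ [l]"] wf_word_mset[OF _ Cons.prems(1), of "(x @ [l]) @ (c,OverE,s) # z @ y"]
      Cons.prems(2) by simp
  finally show ?case by simp
qed simp

lemma vn_equiv_cancel_pair:
  assumes wf: "wf_word (x @ (c,k,s) # z @ (c, opp k, s) # y)"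
    and over: "\<forall>l \<in> set z. fst (snd l) = OverE"
  shows "vn_equiv n [x @ (c,k,s) # z @ (c, opp k, s) # y] [x @ z @ y]"
proof -
  have slide_ok: "\<forall>l \<in> set z. fst (snd l) = OverE \<and> fst l \<noteq> c"
    using over wf_word_crossing_not_elsewhere[OF wf] by auto
  show ?thesis
  proof (cases k)
    case OverE
    have "vn_equiv n [x @ (c,k,s) # z @ (c, opp k, s) # y] [x @ z @ (c,k,s) # (c, opp k, s) # y]"
      using vn_equiv_slide_over[OF _ slide_ok, of x s "(c, opp k, s) # y"] wf OverE by simp
    also have "vn_equiv n \<dots> [x @ z @ y]"
      using vn_equiv_r1[of "x @ z" c k s y] wf_word_mset[OF _ wf] by simp
    finally show ?thesis .
  next
    case UnderE
    have "vn_equiv n [(x @ [(c,k,s)]) @ (c,OverE,s) # z @ y] [(x @ [(c,k,s)]) @ z @ (c,OverE,s) # y]"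
      using vn_equiv_slide_over[OF _ slide_ok, of "x @ [(c,k,s)]" s y] wf_word_mset[OF _ wf] UnderE
      by simp
    then have "vn_equiv n [x @ (c,k,s) # z @ (c, opp k, s) # y] [x @ (c,k,s) # (c, opp k, s) # z @ y]"
      using UnderE by (simp add: vn_equiv_sym)
    also have "vn_equiv n \<dots> [x @ z @ y]"
      using vn_equiv_r1[of x c k s "z @ y"] wf_word_mset[OF _ wf] by simp
    finally show ?thesis .
  qed
qed

lemma wf_word_not_distinct_fst:
  assumes "wf_word w" and "w \<noteq> []"
  shows "\<not> distinct (map fst w)"
proof
  assume "distinct (map fst w)"
  then have inj: "inj_on fst (set w)" by (simp add: distinct_map)
  obtain c k s where l: "(c,k,s) \<in> set w" using assms(2) by (cases w) auto
  have "(c, opp k, s) \<in> set w" using wf_word_partner[OF assms(1) l] .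
  then show False using inj_onD[OF inj _ _ l, of "(c, opp k, s)"] by simp
qed

lemma vn_equiv_shorter_word:
  assumes ev: "even n" and pos: "0 < n" and wf: "wf_word w" and "w \<noteq> []"
  obtains w' where "wf_word w'" "length w' < length w" "vn_equiv n [w] [w']"
proof -
  obtain x e z e' y where w: "w = x @ e # z @ e' # y"
    and same: "fst e = fst e'" and innermost: "distinct (map fst (e # z))"
    using not_distinct_map_first_repeat[OF wf_word_not_distinct_fst[OF wf assms(4)]] by blast
  obtain c k s where e: "e = (c,k,s)" by (cases e)
  have "e' \<noteq> e" using wf_word_distinct[OF wf] w by auto
  then have e': "e' = (c, opp k, s)"
    using wf_word_crossing_ends[OF wf, of c k s e'] w e same by auto
  define F where "F = fst ` {l \<in> set z. fst (snd l) = UnderE}"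
  let ?sw = "map (switch_crossings F)"
  have c: "c \<notin> F" using innermost e by (auto simp: F_def)
  have wf_sw: "wf_word (?sw x @ (c,k,s) # ?sw z @ (c, opp k, s) # ?sw y)"
    using wf_word_switch_crossings[OF wf, of F] c by (simp add: w e e')
  have "vn_equiv n [w] [?sw w]"
    using vn_equiv_switch_crossings[OF ev pos _ wf] by (simp add: F_def)
  also have "?sw w = ?sw x @ (c,k,s) # ?sw z @ (c, opp k, s) # ?sw y"
    using c by (simp add: w e e')
  also have "vn_equiv n [\<dots>] [?sw x @ ?sw z @ ?sw y]"
  proof (rule vn_equiv_cancel_pair)
    show "wf_word (?sw x @ (c,k,s) # ?sw z @ (c, opp k, s) # ?sw y)" by (fact wf_sw)
    show "\<forall>l \<in> set (?sw z). fst (snd l) = OverE"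
      using switch_under_ends_all_over innermost unfolding F_def by simp
  qed
  finally have "vn_equiv n [w] [?sw x @ ?sw z @ ?sw y]" .
  moreover have "wf_word (?sw x @ ?sw z @ ?sw y)"
    using wf_word_delete_pair[OF wf_sw] .
  moreover have "length (?sw x @ ?sw z @ ?sw y) < length w" by (simp add: w)
  ultimately show ?thesis using that by blast
qed

lemma vn_equiv_word_unknot:
  assumes ev: "even n" and pos: "0 < n"
  shows "wf_word w \<Longrightarrow> vn_equiv n [w] unknot"
proof (induction "length w" arbitrary: w rule: less_induct)
  case less
  show ?case
  proof (cases "w = []")
    case True
    then show ?thesis by (simp add: unknot_def)
  next
    case False
    then obtain w' where "wf_word w'" "length w' < length w" "vn_equiv n [w] [w']"
      using vn_equiv_shorter_word[OF ev pos less.prems] by blast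
    then show ?thesis using less.hyps by (blast intro: vn_equiv_trans)
  qed
qed

lemma vn_equiv_merge_components:
  assumes ev: "even n"
  shows "gwf (a # rest) \<Longrightarrow> \<exists>w. wf_word w \<and> vn_equiv n (a # rest) [w]"
proof (induction rest arbitrary: a)
  case Nil
  then show ?case by (auto simp: gwf_iff_wf_word)
next
  case (Cons b rest)
  obtain ids where ids: "length ids = n" "distinct ids" "set ids \<inter> gids (a # b # rest) = {}"
    using fresh_ids[OF finite_gids] by blast
  let ?a' = "a @ twist_word ids OverE True @ b @ twist_word ids (opp OverE) True"
  have merge: "vn_equiv n (a # b # rest) (?a' # rest)"
    by (rule vn_equiv_merge[OF ev ids Cons.prems])
  obtain w where "wf_word w" "vn_equiv n (?a' # rest) [w]"
    using Cons.IH vn_equiv_gwf[OF merge Cons.prems] by blast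
  then show ?case using vn_equiv_trans[OF merge] by blast
qed

theorem theorem1p1:
  fixes n :: nat and D :: gauss
  assumes "n > 0" and "even n" and "gwf D" and "D \<noteq> []"
  shows "vn_equiv n D unknot"
proof -
  obtain a rest where D: "D = a # rest" using \<open>D \<noteq> []\<close> by (cases D) auto
  obtain w where "wf_word w" "vn_equiv n D [w]"
    using vn_equiv_merge_components[OF \<open>even n\<close>] \<open>gwf D\<close> D by blast
  then show ?thesis using vn_equiv_word_unknot[OF \<open>even n\<close> \<open>n > 0\<close>] vn_equiv_trans by blast
qed

end
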